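(* For every $X\in\mathbb R^d$ and every $\psi\in\mathbb H$, $\mathbb M[(X+\zeta X)^*a\,D\psi]=0$.
   Context: $(\Omega,\mathcal G,\mu)$ is a probability space with an ergodic group $\{\tau_x\}_{x\in\mathbb R^d}$ of measure-preserving transformations, $(x,\omega)\mapsto g(\tau_x\omega)$ jointly measurable; $\mathbb M$ expectation, $(\cdot,\cdot)_2,|\cdot|_2$ the $L^2(\Omega)$ inner product and norm. $D_i$ is the $L^2(\Omega)$-generator of $g\mapsto g(\tau_{he_i}\cdot)$, $D\psi=(D_i\psi)_i$. $\sigma:\Omega\to\mathbb R^{d\times d}$ with $x\mapsto\sigma(\tau_x\omega)$ smooth, bounded with bounded derivatives uniformly in $\omega$; $a=\sigma\sigma^*$, $\Lambda I\le a\le\Lambda^{-1}I$; $b_j=\frac12D_ia_{ij}$ (summation convention). $\mathcal C=\mathrm{Span}\{g\star\phi:g\in L^\infty(\Omega),\phi\in C_c^\infty(\mathbb R^d)\}$, $g\star\phi(\omega)=\int g(\tau_x\omega)\phi(x)dx$; $\mathbb H$ the closure of $\mathcal C$ for $|\varphi|_2^2+|D\varphi|_2^2$. $U_\lambda f$ is the unique $w\in\mathbb H$ with $\lambda(w,\varphi)_2+\frac12(a_{ij}D_iw,D_j\varphi)_2=(f,\varphi)_2$ for all $\varphi\in\mathbb H$. $u^j_\lambda=U_\lambda(b_j)$; there exist $\zeta^j\in L^2(\Omega)^d$ with $\lambda|u^j_\lambda|_2^2+|Du^j_\lambda-\zeta^j|_2\to0$ as $\lambda\to0$; $\zeta$ is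 the matrix with entries $\zeta_{ij}=\zeta^j_i$. *)

theory Defs
  imports "HOL-Probability.Probability"
begin

definition ergodic_flow :: "'w measure \<Rightarrow> (real^'d \<Rightarrow> 'w \<Rightarrow> 'w) \<Rightarrow> bool" where
  "ergodic_flow M tau \<longleftrightarrow>
     prob_space M \<and>
     (\<lambda>(x, w). tau x w) \<in> measurable (lborel \<Otimes>\<^sub>M M) M \<and>
     (\<forall>x. \<forall>w\<in>space M. tau x w \<in> space M) \<and>
     (\<forall>w\<in>space M. tau 0 w = w) \<and>
     (\<forall>x y. \<forall>w\<in>space M. tau (x + y) w = tau x (tau y w)) \<and>
     (\<forall>x. tau x \<in> measurable M M \<and> distr M M (tau x) = M) \<and>
     (\<forall>A\<in>sets M. (\<forall>x. tau x -` A \<inter> space M = A) \<longrightarrow>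
         measure M A = 0 \<or> measure M A = 1)"

definition L2 :: "'w measure \<Rightarrow> ('w \<Rightarrow> real) \<Rightarrow> bool" where
  "L2 M f \<longleftrightarrow> f \<in> borel_measurable M \<and> integrable M (\<lambda>w. (f w)\<^sup>2)"

definition L2norm :: "'w measure \<Rightarrow> ('w \<Rightarrow> real) \<Rightarrow> real" where
  "L2norm M f = sqrt (\<integral>w. (f w)\<^sup>2 \<partial>M)"

definition L2normv :: "'w measure \<Rightarrow> ('d::finite \<Rightarrow> 'w \<Rightarrow> real) \<Rightarrow> real" where
  "L2normv M F = sqrt (\<integral>w. (\<Sum>i\<in>UNIV. (F i w)\<^sup>2) \<partial>M)"

definition Linf :: "'w measure \<Rightarrow> ('w \<Rightarrow> real) \<Rightarrow> bool" where
  "Linf M g \<longleftrightarrow> g \<in> borel_measurable M \<and> (\<exists>B. AE w in M. \<bar>g w\<bar> \<le> B)"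

text \<open>has_D M tau i psi phi: psi lies in the domain of the L^2-generator D_i of the
  group g \<mapsto> g(tau_{h e_i} \<cdot>), and D_i psi = phi (in L^2).\<close>
definition has_D :: "'w measure \<Rightarrow> (real^'d \<Rightarrow> 'w \<Rightarrow> 'w) \<Rightarrow> 'd \<Rightarrow> ('w \<Rightarrow> real) \<Rightarrow> ('w \<Rightarrow> real) \<Rightarrow> bool" where
  "has_D M tau i psi phi \<longleftrightarrow> L2 M psi \<and> L2 M phi \<and>
     ((\<lambda>h. L2norm M (\<lambda>w. (psi (tau (h *\<^sub>R axis i 1) w) - psi w) / h - phi w)) \<longlongrightarrow> 0) (at 0)"

text \<open>Smooth (C^infinity) function on R^d: all iterated partial derivatives exist everywhere.
  F js is the iterated partial derivative along the directions in the list js.\<close>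
definition smooth_fun :: "(real^'d \<Rightarrow> real) \<Rightarrow> bool" where
  "smooth_fun f \<longleftrightarrow> (\<exists>F :: 'd list \<Rightarrow> real^'d \<Rightarrow> real. F [] = f \<and>
     (\<forall>js x j. ((\<lambda>t. F js (x + t *\<^sub>R axis j 1)) has_real_derivative F (j # js) x) (at 0)))"

definition smooth_cpt :: "(real^'d \<Rightarrow> real) \<Rightarrow> bool" where
  "smooth_cpt f \<longleftrightarrow> smooth_fun f \<and> compact (closure {x. f x \<noteq> 0})"

definition bdd_smooth_family :: "'w set \<Rightarrow> ('w \<Rightarrow> real^'d \<Rightarrow> real) \<Rightarrow> bool" where
  "bdd_smooth_family S f \<longleftrightarrow> (\<exists>F :: 'd list \<Rightarrow> 'w \<Rightarrow> real^'d \<Rightarrow> real.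
     (\<forall>w\<in>S. F [] w = f w) \<and>
     (\<forall>js. \<forall>w\<in>S. \<forall>x j. ((\<lambda>t. F js w (x + t *\<^sub>R axis j 1)) has_real_derivative F (j # js) w x) (at 0)) \<and>
     (\<forall>js. \<exists>B. \<forall>w\<in>S. \<forall>x. \<bar>F js w x\<bar> \<le> B))"

definition conv :: "(real^'d \<Rightarrow> 'w \<Rightarrow> 'w) \<Rightarrow> ('w \<Rightarrow> real) \<Rightarrow> (real^'d \<Rightarrow> real) \<Rightarrow> 'w \<Rightarrow> real" where
  "conv tau g phi w = (\<integral>x. g (tau x w) * phi x \<partial>lborel)"

text \<open>The class \<C>: finite linear combinations of g \<star> phi (scalars absorbed in g).\<close>
definition Cset :: "'w measure \<Rightarrow> (real^'d \<Rightarrow> 'w \<Rightarrow> 'w) \<Rightarrow> ('w \<Rightarrow> real) set" where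
  "Cset M tau = {psi. \<exists>n (g :: nat \<Rightarrow> 'w \<Rightarrow> real) (phi :: nat \<Rightarrow> real^'d \<Rightarrow> real).
      (\<forall>k<n. Linf M (g k) \<and> smooth_cpt (phi k)) \<and>
      psi = (\<lambda>w. \<Sum>k<n. conv tau (g k) (phi k) w)}"

text \<open>\<H>: closure of \<C> in the norm |psi|_2^2 + |D psi|_2^2.\<close>
definition Hset :: "'w measure \<Rightarrow> (real^'d \<Rightarrow> 'w \<Rightarrow> 'w) \<Rightarrow> ('w \<Rightarrow> real) set" where
  "Hset M tau = {psi. L2 M psi \<and>
      (\<exists>(c :: nat \<Rightarrow> 'w \<Rightarrow> real) (Dc :: nat \<Rightarrow> 'd \<Rightarrow> 'w \<Rightarrow> real) (G :: 'd \<Rightarrow> 'w \<Rightarrow> real).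
         (\<forall>n. c n \<in> Cset M tau \<and> (\<forall>i. has_D M tau i (c n) (Dc n i))) \<and>
         (\<forall>i. L2 M (G i)) \<and>
         (\<lambda>n. L2norm M (\<lambda>w. c n w - psi w)) \<longlonglongrightarrow> 0 \<and>
         (\<lambda>n. L2normv M (\<lambda>i w. Dc n i w - G i w)) \<longlonglongrightarrow> 0)}"

end

theory Submission imports Defs begin

(* The theorem says that the vector field  (I + zeta) X  is "a-harmonic" against every psi in H:
   M[(X + zeta X)^T a D psi] = 0.  Writing  W_i = sum_k a_ik D_k psi  (the flux of psi), the
   integral splits as  sum_i X_i M[W_i] + sum_j X_j sum_i M[zeta_ji W_i], and the two pieces
   cancel because of two identities:
   (1) drift identity: M[W_j] = -2 M[b_j psi].  This is integration by parts for the
       generators D_k (which are skew-adjoint since tau preserves the measure) together with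
       the symmetry of a = sigma sigma^T and b_j = 1/2 sum_i D_i a_ij;
   (2) corrector identity: sum_i M[zeta_ji W_i] = 2 M[b_j psi].  This is the resolvent equation
       for u_lambda^j tested with psi, in the limit lambda -> 0, using lambda |u_lambda|^2 -> 0
       and D u_lambda -> zeta^j in L^2.
   The file first develops elementary L^2 calculus (products, Cauchy-Schwarz, continuity of
   the inner product), then the invariance of integrals under a measure-preserving flow and
   the integration-by-parts formula for the generators, then boundedness of the coefficients,
   the limit of the resolvent equation, and finally derives the theorem in a few steps. *)

lemma L2_integrable_mult:
  assumes "L2 M f" "L2 M g"
  shows "integrable M (\<lambda>w. f w * g w)"
proof (rule Bochner_Integration.integrable_bound[where f="\<lambda>w. (f w)\<^sup>2 + (g w)\<^sup>2"])
  show "integrable M (\<lambda>w. (f w)\<^sup>2 + (g w)\<^sup>2)" using assms by (auto simp: L2_def)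
  show "(\<lambda>w. f w * g w) \<in> borel_measurable M" using assms by (auto simp: L2_def)
  have "\<bar>f x * g x\<bar> \<le> (f x)\<^sup>2 + (g x)\<^sup>2" for x
  proof -
    have "2 * \<bar>f x\<bar> * \<bar>g x\<bar> \<le> \<bar>f x\<bar>\<^sup>2 + \<bar>g x\<bar>\<^sup>2" by (rule sum_squares_bound)
    moreover have "0 \<le> \<bar>f x\<bar> * \<bar>g x\<bar>" by simp
    ultimately show ?thesis unfolding abs_mult power2_abs by linarith
  qed
  then show "AE x in M. norm (f x * g x) \<le> norm ((f x)\<^sup>2 + (g x)\<^sup>2)" by simp
qed

lemma L2_add: "L2 M f \<Longrightarrow> L2 M g \<Longrightarrow> L2 M (\<lambda>w. f w + g w)"
  unfolding L2_def power2_sum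
  using L2_integrable_mult[of M f g] by (auto simp: L2_def mult.assoc)

lemma L2_cmult: "L2 M f \<Longrightarrow> L2 M (\<lambda>w. c * f w)"
  unfolding L2_def by (auto simp: power_mult_distrib)

lemma L2_diff: "L2 M f \<Longrightarrow> L2 M g \<Longrightarrow> L2 M (\<lambda>w. f w - g w)"
  using L2_add[of M f "\<lambda>w. -1 * g w"] L2_cmult[of M g "-1"] by simp

lemma L2_div: "L2 M f \<Longrightarrow> L2 M (\<lambda>w. f w / c)"
  using L2_cmult[of M f "1/c"] by simp

lemma L2_const: "finite_measure M \<Longrightarrow> L2 M (\<lambda>w. c)"
  unfolding L2_def by (simp add: finite_measure.integrable_const)

lemma L2_sum:
  assumes "finite I" "\<And>i. i \<in> I \<Longrightarrow> L2 M (f i)"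
  shows "L2 M (\<lambda>w. \<Sum>i\<in>I. f i w)"
proof (use assms in \<open>induction I rule: finite_induct\<close>)
  case empty
  then show ?case by (simp add: L2_def)
next
  case (insert i I)
  then show ?case by (simp add: L2_add)
qed

lemma L2_bounded_mult:
  assumes "L2 M f" "c \<in> borel_measurable M" "\<And>w. w \<in> space M \<Longrightarrow> \<bar>c w\<bar> \<le> B"
  shows "L2 M (\<lambda>w. c w * f w)"
  unfolding L2_def
proof
  show "(\<lambda>w. c w * f w) \<in> borel_measurable M" using assms by (auto simp: L2_def)
  show "integrable M (\<lambda>w. (c w * f w)\<^sup>2)"
  proof (rule Bochner_Integration.integrable_bound[where f="\<lambda>w. B\<^sup>2 * (f w)\<^sup>2"])
    show "integrable M (\<lambda>w. B\<^sup>2 * (f w)\<^sup>2)" using assms by (auto simp: L2_def)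
    show "(\<lambda>w. (c w * f w)\<^sup>2) \<in> borel_measurable M" using assms by (auto simp: L2_def)
    have "(c x)\<^sup>2 \<le> B\<^sup>2" if "x \<in> space M" for x
      using power_mono[OF assms(3)[OF that], of 2] by simp
    then show "AE x in M. norm ((c x * f x)\<^sup>2) \<le> norm (B\<^sup>2 * (f x)\<^sup>2)"
      by (intro AE_I2) (simp add: power_mult_distrib mult_right_mono)
  qed
qed

lemma integral_square_nonneg: "0 \<le> (\<integral>w. (f w :: real)\<^sup>2 \<partial>M)"
  by (simp add: integral_nonneg_AE)

lemma L2norm_square: "(L2norm M f)\<^sup>2 = (\<integral>w. (f w)\<^sup>2 \<partial>M)"
  unfolding L2norm_def by (simp add: integral_square_nonneg)

text \<open>Cauchy--Schwarz inequality in \<open>L\<^sup>2(M)\<close>, via the discriminant of the nonnegative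
  quadratic \<open>t \<mapsto> \<integral>(f - t g)\<^sup>2\<close>.\<close>
lemma L2_Cauchy_Schwarz:
  assumes "L2 M f" "L2 M g"
  shows "\<bar>\<integral>w. f w * g w \<partial>M\<bar> \<le> L2norm M f * L2norm M g"
proof -
  define A where "A = (\<integral>w. (f w)\<^sup>2 \<partial>M)"
  define B where "B = (\<integral>w. (g w)\<^sup>2 \<partial>M)"
  define C where "C = (\<integral>w. f w * g w \<partial>M)"
  have quadratic_nonneg: "0 \<le> A - 2 * t * C + t\<^sup>2 * B" for t
  proof -
    have "(\<integral>w. (f w - t * g w)\<^sup>2 \<partial>M) = (\<integral>w. (f w)\<^sup>2 - 2 * t * (f w * g w) + t\<^sup>2 * (g w)\<^sup>2 \<partial>M)"
      by (rule Bochner_Integration.integral_cong) (auto simp: power2_eq_square algebra_simps)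
    also have "\<dots> = A - 2 * t * C + t\<^sup>2 * B"
      using assms L2_integrable_mult[OF assms] by (simp add: A_def B_def C_def L2_def)
    finally show ?thesis using integral_square_nonneg[of M "\<lambda>w. f w - t * g w"] by simp
  qed
  have "C\<^sup>2 \<le> A * B"
  proof (cases "B = 0")
    case True
    have "C = 0"
    proof (rule ccontr)
      assume "C \<noteq> 0"
      then show False
        using quadratic_nonneg[of "(A + 1) / (2 * C)"] True by simp
    qed
    then show ?thesis using True by simp
  next
    case False
    then have "0 < B" using integral_square_nonneg[of M g] unfolding B_def by linarith
    moreover have "0 \<le> A - 2 * (C / B) * C + (C / B)\<^sup>2 * B" by (rule quadratic_nonneg)
    ultimately show ?thesis by (simp add: power2_eq_square field_simps)
  qed
  then have "sqrt (C\<^sup>2) \<le> sqrt (A * B)" by (rule real_sqrt_le_mono)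
  then show ?thesis by (simp add: A_def B_def C_def L2norm_def real_sqrt_mult)
qed

lemma L2_inner_tendsto_zero:
  assumes ev: "eventually (\<lambda>h. L2 M (P h) \<and> L2 M (Q h)) F"
    and P: "((\<lambda>h. \<integral>w. (P h w)\<^sup>2 \<partial>M) \<longlongrightarrow> 0) F"
    and Q: "((\<lambda>h. \<integral>w. (Q h w)\<^sup>2 \<partial>M) \<longlongrightarrow> q) F"
  shows "((\<lambda>h. \<integral>w. P h w * Q h w \<partial>M) \<longlongrightarrow> 0) F"
proof (rule tendsto_0_le[where K=1])
  have "((\<lambda>h. L2norm M (P h) * L2norm M (Q h)) \<longlongrightarrow> sqrt 0 * sqrt q) F"
    unfolding L2norm_def by (intro tendsto_mult tendsto_real_sqrt P Q)
  then show "((\<lambda>h. L2norm M (P h) * L2norm M (Q h)) \<longlongrightarrow> 0) F" by simp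
  show "\<forall>\<^sub>F h in F. norm (\<integral>w. P h w * Q h w \<partial>M) \<le> norm (L2norm M (P h) * L2norm M (Q h)) * 1"
    using ev by eventually_elim (use L2_Cauchy_Schwarz in \<open>auto simp: L2norm_def\<close>)
qed

lemma L2_inner_tendsto:
  assumes ev: "eventually (\<lambda>h. L2 M (Fh h) \<and> L2 M (Gh h)) F"
    and F0: "L2 M F0" and G0: "L2 M G0"
    and FF: "((\<lambda>h. \<integral>w. (Fh h w - F0 w)\<^sup>2 \<partial>M) \<longlongrightarrow> 0) F"
    and GG: "((\<lambda>h. \<integral>w. (Gh h w - G0 w)\<^sup>2 \<partial>M) \<longlongrightarrow> 0) F"
  shows "((\<lambda>h. \<integral>w. Fh h w * Gh h w \<partial>M) \<longlongrightarrow> (\<integral>w. F0 w * G0 w \<partial>M)) F"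
proof -
  let ?P = "\<lambda>h w. Fh h w - F0 w" and ?Q = "\<lambda>h w. Gh h w - G0 w"
  let ?error = "\<lambda>h. (\<integral>w. ?P h w * ?Q h w \<partial>M) + (\<integral>w. ?P h w * G0 w \<partial>M) + (\<integral>w. ?Q h w * F0 w \<partial>M)"
  have evPQ: "eventually (\<lambda>h. L2 M (?P h) \<and> L2 M (?Q h)) F"
    using ev by eventually_elim (auto intro: L2_diff F0 G0)
  have "(?error \<longlongrightarrow> 0 + 0 + 0) F"
  proof (intro tendsto_add)
    show "((\<lambda>h. \<integral>w. ?P h w * ?Q h w \<partial>M) \<longlongrightarrow> 0) F"
      by (rule L2_inner_tendsto_zero[OF evPQ FF GG])
    show "((\<lambda>h. \<integral>w. ?P h w * G0 w \<partial>M) \<longlongrightarrow> 0) F"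
      by (rule L2_inner_tendsto_zero[OF _ FF tendsto_const]) (use evPQ G0 in \<open>auto elim: eventually_mono\<close>)
    show "((\<lambda>h. \<integral>w. ?Q h w * F0 w \<partial>M) \<longlongrightarrow> 0) F"
      by (rule L2_inner_tendsto_zero[OF _ GG tendsto_const]) (use evPQ F0 in \<open>auto elim: eventually_mono\<close>)
  qed
  then have "((\<lambda>h. (\<integral>w. F0 w * G0 w \<partial>M) + ?error h) \<longlongrightarrow> (\<integral>w. F0 w * G0 w \<partial>M)) F"
    using tendsto_add[OF tendsto_const] by fastforce
  moreover have "\<forall>\<^sub>F h in F. (\<integral>w. F0 w * G0 w \<partial>M) + ?error h = (\<integral>w. Fh h w * Gh h w \<partial>M)"
    using evPQ ev
  proof eventually_elim
    case (elim h)
    have "(\<integral>w. F0 w * G0 w \<partial>M) + ?error h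
        = (\<integral>w. F0 w * G0 w + (?P h w * ?Q h w + ?P h w * G0 w + ?Q h w * F0 w) \<partial>M)"
      using elim F0 G0 by (simp add: L2_integrable_mult)
    also have "\<dots> = (\<integral>w. Fh h w * Gh h w \<partial>M)"
      by (rule Bochner_Integration.integral_cong) (auto simp: algebra_simps)
    finally show ?case .
  qed
  ultimately show ?thesis by (rule Lim_transform_eventually)
qed

lemma ergodic_flow_measure_preserving:
  assumes "ergodic_flow M tau"
  shows "finite_measure M" "tau x \<in> measurable M M" "distr M M (tau x) = M"
    "\<And>w. w \<in> space M \<Longrightarrow> tau 0 w = w"
  using assms prob_space.finite_measure unfolding ergodic_flow_def by auto

lemma L2_measure_preserving_comp:
  assumes T: "T \<in> measurable M M" "distr M M T = M" and f: "L2 M f"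
  shows "L2 M (\<lambda>w. f (T w))"
proof -
  have fm: "f \<in> borel_measurable M" using f by (simp add: L2_def)
  have "integrable (distr M M T) (\<lambda>w. (f w)\<^sup>2) \<longleftrightarrow> integrable M (\<lambda>w. (f (T w))\<^sup>2)"
    by (rule integrable_distr_eq[OF T(1)]) (use fm in simp)
  then show ?thesis using f fm T by (auto simp: L2_def intro: measurable_compose)
qed

lemma integral_measure_preserving_comp:
  assumes T: "T \<in> measurable M M" "distr M M T = M" and f: "f \<in> borel_measurable M"
  shows "(\<integral>w. f (T w) \<partial>M) = (\<integral>w. (f w :: real) \<partial>M)"
  using integral_distr[OF T(1) f] T(2) by simp

lemma has_D_tendsto:
  assumes "has_D M tau i g Dg"
  shows "((\<lambda>h. \<integral>w. ((g (tau (h *\<^sub>R axis i 1) w) - g w) / h - Dg w)\<^sup>2 \<partial>M) \<longlongrightarrow> 0) (at 0)"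
proof -
  let ?norm = "\<lambda>h. L2norm M (\<lambda>w. (g (tau (h *\<^sub>R axis i 1) w) - g w) / h - Dg w)"
  have "((\<lambda>h. (?norm h)\<^sup>2) \<longlongrightarrow> 0\<^sup>2) (at 0)"
    using assms unfolding has_D_def by (intro tendsto_power) auto
  then show ?thesis by (simp add: L2norm_square)
qed

text \<open>An element of the domain of \<open>D\<^sub>i\<close> is \<open>L\<^sup>2\<close>-continuous along the flow in direction \<open>e\<^sub>i\<close>:
  \<open>\<parallel>g \<circ> \<tau>\<^sub>h\<^sub>e\<^sub>i - g\<parallel>\<^sup>2 \<le> h\<^sup>2 (2\<parallel>difference quotient - D\<^sub>ig\<parallel>\<^sup>2 + 2\<parallel>D\<^sub>ig\<parallel>\<^sup>2) \<rightarrow> 0\<close>.\<close>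
lemma has_D_translate_tendsto:
  assumes meas: "\<And>x. tau x \<in> measurable M M" and pres: "\<And>x. distr M M (tau x) = M"
    and hg: "has_D M tau i g Dg"
  shows "((\<lambda>h. \<integral>w. (g (tau (h *\<^sub>R axis i 1) w) - g w)\<^sup>2 \<partial>M) \<longlongrightarrow> 0) (at 0)"
proof (rule tendsto_0_le[where K=1])
  have g: "L2 M g" and Dg: "L2 M Dg" using hg by (auto simp: has_D_def)
  define dg where "dg h w = (g (tau (h *\<^sub>R axis i 1) w) - g w) / h" for h w
  have dgDg: "L2 M (\<lambda>w. dg h w - Dg w)" for h
  proof -
    have "L2 M (\<lambda>w. g (tau (h *\<^sub>R axis i 1) w))"
      by (rule L2_measure_preserving_comp[OF meas pres g])
    then show ?thesis unfolding dg_def by (intro L2_diff L2_div g Dg)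
  qed
  let ?B = "\<lambda>h. h\<^sup>2 * (2 * (\<integral>w. (dg h w - Dg w)\<^sup>2 \<partial>M) + 2 * (\<integral>w. (Dg w)\<^sup>2 \<partial>M))"
  have "(?B \<longlongrightarrow> 0\<^sup>2 * (2 * 0 + 2 * (\<integral>w. (Dg w)\<^sup>2 \<partial>M))) (at 0)"
    using has_D_tendsto[OF hg] unfolding dg_def
    by (intro tendsto_mult tendsto_add tendsto_const tendsto_power tendsto_ident_at)
  then show "(?B \<longlongrightarrow> 0) (at 0)" by simp
  have "(\<integral>w. (g (tau (h *\<^sub>R axis i 1) w) - g w)\<^sup>2 \<partial>M) \<le> ?B h" if "h \<noteq> 0" for h
  proof -
    have "(\<integral>w. (g (tau (h *\<^sub>R axis i 1) w) - g w)\<^sup>2 \<partial>M) = h\<^sup>2 * (\<integral>w. (dg h w)\<^sup>2 \<partial>M)"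
      using that by (simp add: dg_def power_divide)
    also have "(\<integral>w. (dg h w)\<^sup>2 \<partial>M) \<le> (\<integral>w. 2 * (dg h w - Dg w)\<^sup>2 + 2 * (Dg w)\<^sup>2 \<partial>M)"
    proof (rule integral_mono)
      have "L2 M (dg h)" using L2_add[OF dgDg Dg] by simp
      then show "integrable M (\<lambda>w. (dg h w)\<^sup>2)" by (simp add: L2_def)
      show "integrable M (\<lambda>w. 2 * (dg h w - Dg w)\<^sup>2 + 2 * (Dg w)\<^sup>2)"
        using dgDg Dg by (auto simp: L2_def)
      show "(dg h w)\<^sup>2 \<le> 2 * (dg h w - Dg w)\<^sup>2 + 2 * (Dg w)\<^sup>2" for w
        using zero_le_power2[of "dg h w - 2 * Dg w"] by (simp add: power2_eq_square algebra_simps)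
    qed
    also have "(\<integral>w. 2 * (dg h w - Dg w)\<^sup>2 + 2 * (Dg w)\<^sup>2 \<partial>M)
        = 2 * (\<integral>w. (dg h w - Dg w)\<^sup>2 \<partial>M) + 2 * (\<integral>w. (Dg w)\<^sup>2 \<partial>M)"
      using dgDg Dg by (auto simp: L2_def)
    finally show ?thesis by (simp add: mult_left_mono)
  qed
  then show "\<forall>\<^sub>F h in at 0. norm (\<integral>w. (g (tau (h *\<^sub>R axis i 1) w) - g w)\<^sup>2 \<partial>M) \<le> norm (?B h) * 1"
    unfolding eventually_at_filter
    by (intro always_eventually allI impI) (simp add: integral_square_nonneg)
qed

text \<open>The difference quotients satisfy
  \<open>df\<^sub>h \<cdot> (g \<circ> T\<^sub>h) + f \<cdot> dg\<^sub>h = ((f g) \<circ> T\<^sub>h - f g) / h\<close>, whose integral vanishes because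
  \<open>T\<^sub>h = \<tau>\<^sub>h\<^sub>e\<^sub>i\<close> preserves \<open>M\<close>; letting \<open>h \<rightarrow> 0\<close> gives the identity.\<close>
lemma has_D_integration_by_parts:
  assumes meas: "\<And>x. tau x \<in> measurable M M" and pres: "\<And>x. distr M M (tau x) = M"
    and hf: "has_D M tau i f Df" and hg: "has_D M tau i g Dg"
  shows "(\<integral>w. Df w * g w \<partial>M) + (\<integral>w. f w * Dg w \<partial>M) = 0"
proof -
  define T where "T h = tau (h *\<^sub>R axis i 1)" for h
  define df where "df h w = (f (T h w) - f w) / h" for h w
  define dg where "dg h w = (g (T h w) - g w) / h" for h w
  have f: "L2 M f" and Df: "L2 M Df" and g: "L2 M g" and Dg: "L2 M Dg"
    using hf hg by (auto simp: has_D_def)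
  have fT: "L2 M (\<lambda>w. f (T h w))" and gT: "L2 M (\<lambda>w. g (T h w))" for h
    unfolding T_def by (rule L2_measure_preserving_comp[OF meas pres f],
                        rule L2_measure_preserving_comp[OF meas pres g])
  have dfL: "L2 M (df h)" and dgL: "L2 M (dg h)" for h
    unfolding df_def dg_def by (intro L2_div L2_diff fT gT f g)+
  have "((\<lambda>h. (\<integral>w. df h w * g (T h w) \<partial>M) + (\<integral>w. f w * dg h w \<partial>M))
     \<longlongrightarrow> (\<integral>w. Df w * g w \<partial>M) + (\<integral>w. f w * Dg w \<partial>M)) (at 0)"
  proof (intro tendsto_add)
    show "((\<lambda>h. \<integral>w. df h w * g (T h w) \<partial>M) \<longlongrightarrow> (\<integral>w. Df w * g w \<partial>M)) (at 0)"
      using has_D_tendsto[OF hf] has_D_translate_tendsto[OF meas pres hg]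
      by (intro L2_inner_tendsto always_eventually allI conjI dfL gT Df g) (simp_all add: df_def T_def)
    show "((\<lambda>h. \<integral>w. f w * dg h w \<partial>M) \<longlongrightarrow> (\<integral>w. f w * Dg w \<partial>M)) (at 0)"
      using has_D_tendsto[OF hg]
      by (intro L2_inner_tendsto always_eventually allI conjI dgL f Dg) (simp_all add: dg_def T_def)
  qed
  moreover have "(\<integral>w. df h w * g (T h w) \<partial>M) + (\<integral>w. f w * dg h w \<partial>M) = 0" if "h \<noteq> 0" for h
  proof -
    have fgT: "(\<integral>w. f (T h w) * g (T h w) \<partial>M) = (\<integral>w. f w * g w \<partial>M)"
      unfolding T_def using L2_integrable_mult[OF f g]
      by (intro integral_measure_preserving_comp meas pres) auto
    have "(\<integral>w. df h w * g (T h w) \<partial>M) + (\<integral>w. f w * dg h w \<partial>M)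
        = (\<integral>w. df h w * g (T h w) + f w * dg h w \<partial>M)"
      using L2_integrable_mult[OF dfL gT] L2_integrable_mult[OF f dgL] by simp
    also have "\<dots> = (\<integral>w. (f (T h w) * g (T h w) - f w * g w) / h \<partial>M)"
      using that by (intro Bochner_Integration.integral_cong) (auto simp: df_def dg_def field_simps)
    also have "\<dots> = ((\<integral>w. f (T h w) * g (T h w) \<partial>M) - (\<integral>w. f w * g w \<partial>M)) / h"
      using L2_integrable_mult[OF fT gT] L2_integrable_mult[OF f g] by simp
    finally show ?thesis using fgT by simp
  qed
  then have "\<forall>\<^sub>F h in at 0. 0 = (\<integral>w. df h w * g (T h w) \<partial>M) + (\<integral>w. f w * dg h w \<partial>M)"
    by (auto simp: eventually_at_filter)
  then have "((\<lambda>h. (\<integral>w. df h w * g (T h w) \<partial>M) + (\<integral>w. f w * dg h w \<partial>M)) \<longlongrightarrow> 0) (at 0)"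
    by (rule Lim_transform_eventually[OF tendsto_const])
  ultimately show ?thesis by (rule tendsto_unique[rotated]) simp
qed

lemma bdd_smooth_family_bounded:
  fixes f :: "'w \<Rightarrow> real^'d \<Rightarrow> real"
  assumes "bdd_smooth_family S f"
  shows "\<exists>B. \<forall>w\<in>S. \<forall>x. \<bar>f w x\<bar> \<le> B"
proof -
  obtain F :: "'d list \<Rightarrow> 'w \<Rightarrow> real^'d \<Rightarrow> real" where
    F0: "\<forall>w\<in>S. F [] w = f w" and FB: "\<forall>js. \<exists>B. \<forall>w\<in>S. \<forall>x. \<bar>F js w x\<bar> \<le> B"
    using assms unfolding bdd_smooth_family_def by blast
  then show ?thesis by metis
qed

lemma finite_common_bound:
  fixes f :: "'p::finite \<Rightarrow> 'w \<Rightarrow> real"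
  assumes "\<And>p. \<exists>B. \<forall>w\<in>S. \<bar>f p w\<bar> \<le> B"
  shows "\<exists>B. \<forall>p. \<forall>w\<in>S. \<bar>f p w\<bar> \<le> B"
proof -
  obtain B where B: "\<And>p w. w \<in> S \<Longrightarrow> \<bar>f p w\<bar> \<le> B p" using assms by metis
  have "\<bar>f p w\<bar> \<le> (\<Sum>q\<in>UNIV. \<bar>B q\<bar>)" if "w \<in> S" for p w
    using B[OF that, of p] member_le_sum[of p UNIV "\<lambda>q. \<bar>B q\<bar>"] by simp
  then show ?thesis by blast
qed

lemma gram_entry_bound:
  fixes S :: "real^'d^'d" and B :: real
  assumes "\<And>k l. \<bar>S $ k $ l\<bar> \<le> B"
  shows "\<bar>(S ** transpose S) $ i $ k\<bar> \<le> CARD('d) * B\<^sup>2"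
proof -
  have "\<bar>(S ** transpose S) $ i $ k\<bar> = \<bar>\<Sum>j\<in>UNIV. S $ i $ j * S $ k $ j\<bar>"
    by (simp add: matrix_matrix_mult_def transpose_def)
  also have "\<dots> \<le> (\<Sum>j\<in>UNIV. \<bar>S $ i $ j\<bar> * \<bar>S $ k $ j\<bar>)"
    by (rule order_trans[OF sum_abs]) (simp add: abs_mult)
  also have "\<dots> \<le> (\<Sum>j\<in>(UNIV::'d set). B * B)"
    using assms by (intro sum_mono mult_mono) (auto intro: order_trans[OF abs_ge_zero])
  finally show ?thesis by (simp add: power2_eq_square)
qed

lemma gram_symmetric: "(S ** transpose S) $ i $ k = (S ** transpose S) $ k $ i"
  for S :: "real^'d^'d"
  by (simp add: matrix_matrix_mult_def transpose_def mult.commute)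

text \<open>The diffusion matrix \<open>a = \<sigma> \<sigma>\<^sup>T\<close> is bounded: evaluate the bounded smooth family
  \<open>x \<mapsto> \<sigma>(\<tau>\<^sub>x w)\<close> at \<open>x = 0\<close>, where \<open>\<tau>\<^sub>0\<close> is the identity.\<close>
lemma diffusion_matrix_bounded:
  fixes sigma :: "'w \<Rightarrow> real^'d^'d" and tau :: "real^'d \<Rightarrow> 'w \<Rightarrow> 'w"
  assumes tau0: "\<And>w. w \<in> S \<Longrightarrow> tau 0 w = w"
    and smooth: "\<forall>k l. bdd_smooth_family S (\<lambda>w x. sigma (tau x w) $ k $ l)"
  shows "\<exists>C. \<forall>w\<in>S. \<forall>i k. \<bar>(sigma w ** transpose (sigma w)) $ i $ k\<bar> \<le> C"
proof -
  have "\<exists>B. \<forall>w\<in>S. \<bar>sigma w $ fst p $ snd p\<bar> \<le> B" for p :: "'d \<times> 'd"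
  proof -
    obtain B where "\<forall>w\<in>S. \<forall>x. \<bar>sigma (tau x w) $ fst p $ snd p\<bar> \<le> B"
      using bdd_smooth_family_bounded smooth by blast
    then show ?thesis using tau0 by (metis (no_types, lifting))
  qed
  then obtain B where "\<forall>p. \<forall>w\<in>S. \<bar>sigma w $ fst p $ snd p\<bar> \<le> B"
    using finite_common_bound[where f="\<lambda>p w. sigma w $ fst p $ snd p"] by blast
  then have "\<bar>sigma w $ k $ l\<bar> \<le> B" if "w \<in> S" for w k l
    using that by (metis fst_conv snd_conv)
  then show ?thesis using gram_entry_bound by blast
qed

lemma tendsto_zero_nonneg_summands:
  fixes f g :: "'a \<Rightarrow> real"
  assumes lim: "((\<lambda>x. f x + g x) \<longlongrightarrow> 0) F" and nonneg: "eventually (\<lambda>x. 0 \<le> f x \<and> 0 \<le> g x) F"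
  shows "(f \<longlongrightarrow> 0) F" "(g \<longlongrightarrow> 0) F"
  by (rule tendsto_0_le[OF lim, where K=1], use nonneg in \<open>auto elim: eventually_mono\<close>)+

lemma L2normv_nonneg: "0 \<le> L2normv M V"
  unfolding L2normv_def by (simp add: integral_nonneg_AE sum_nonneg)

lemma L2normv_tendsto_component:
  fixes V :: "'a \<Rightarrow> 'i::finite \<Rightarrow> 'w \<Rightarrow> real"
  assumes lim: "((\<lambda>l. L2normv M (V l)) \<longlongrightarrow> 0) F" and L2: "eventually (\<lambda>l. \<forall>i. L2 M (V l i)) F"
  shows "((\<lambda>l. \<integral>w. (V l i w)\<^sup>2 \<partial>M) \<longlongrightarrow> 0) F"
proof (rule tendsto_0_le[where K=1])
  have "((\<lambda>l. (L2normv M (V l))\<^sup>2) \<longlongrightarrow> 0\<^sup>2) F" by (intro tendsto_power lim)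
  moreover have "(L2normv M (V l))\<^sup>2 = (\<integral>w. (\<Sum>i\<in>UNIV. (V l i w)\<^sup>2) \<partial>M)" for l
    unfolding L2normv_def by (simp add: integral_nonneg_AE sum_nonneg)
  ultimately show "((\<lambda>l. \<integral>w. (\<Sum>i\<in>UNIV. (V l i w)\<^sup>2) \<partial>M) \<longlongrightarrow> 0) F" by simp
  show "\<forall>\<^sub>F l in F. norm (\<integral>w. (V l i w)\<^sup>2 \<partial>M) \<le> norm (\<integral>w. (\<Sum>i\<in>UNIV. (V l i w)\<^sup>2) \<partial>M) * 1"
    using L2
  proof eventually_elim
    case (elim l)
    have "(\<integral>w. (V l i w)\<^sup>2 \<partial>M) \<le> (\<integral>w. (\<Sum>i\<in>UNIV. (V l i w)\<^sup>2) \<partial>M)"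
      using elim by (intro integral_mono Bochner_Integration.integrable_sum member_le_sum)
        (auto simp: L2_def)
    then show ?case by (simp add: integral_square_nonneg)
  qed
qed

text \<open>Passage to the limit \<open>\<lambda> \<rightarrow> 0\<close> in the resolvent equation
  \<open>\<lambda> M[U\<^sub>\<lambda> \<phi>] + 1/2 \<Sum>\<^sub>i M[DU\<^sub>\<lambda>,\<^sub>i W\<^sub>i] = c\<close>: if \<open>\<lambda> |U\<^sub>\<lambda>|\<^sup>2 \<rightarrow> 0\<close> and \<open>DU\<^sub>\<lambda> \<rightarrow> Z\<close> in \<open>L\<^sup>2\<close>,
  then the first term vanishes by Cauchy--Schwarz and the second converges.\<close>
lemma resolvent_equation_limit:
  fixes U :: "real \<Rightarrow> 'w \<Rightarrow> real" and DU :: "real \<Rightarrow> 'i::finite \<Rightarrow> 'w \<Rightarrow> real"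
  assumes U: "\<And>l. 0 < l \<Longrightarrow> L2 M (U l)" and DU: "\<And>l i. 0 < l \<Longrightarrow> L2 M (DU l i)"
    and Z: "\<And>i. L2 M (Z i)" and phi: "L2 M phi" and W: "\<And>i. L2 M (W i)"
    and eq: "\<And>l. 0 < l \<Longrightarrow>
      l * (\<integral>w. U l w * phi w \<partial>M) + 1/2 * (\<Sum>i\<in>UNIV. \<integral>w. DU l i w * W i w \<partial>M) = c"
    and lim: "((\<lambda>l. l * (L2norm M (U l))\<^sup>2 + L2normv M (\<lambda>i w. DU l i w - Z i w)) \<longlongrightarrow> 0) (at_right 0)"
  shows "1/2 * (\<Sum>i\<in>UNIV. \<integral>w. Z i w * W i w \<partial>M) = c"
proof -
  let ?F = "at_right (0::real)"
  have pos: "eventually (\<lambda>l. 0 < l) ?F" by (rule eventually_at_right_less)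
  have nonneg: "eventually (\<lambda>l. 0 \<le> l * (L2norm M (U l))\<^sup>2 \<and> 0 \<le> L2normv M (\<lambda>i w. DU l i w - Z i w)) ?F"
    using pos by eventually_elim (simp add: L2normv_nonneg)
  note energy = tendsto_zero_nonneg_summands(1)[OF lim nonneg]
  note gradient = tendsto_zero_nonneg_summands(2)[OF lim nonneg]
  have vanishing: "((\<lambda>l. l * (\<integral>w. U l w * phi w \<partial>M)) \<longlongrightarrow> 0) ?F"
  proof (rule tendsto_0_le[where K=1])
    let ?bound = "\<lambda>l. sqrt l * sqrt (l * (L2norm M (U l))\<^sup>2) * L2norm M phi"
    have "(?bound \<longlongrightarrow> sqrt 0 * sqrt 0 * L2norm M phi) ?F"
      by (intro tendsto_mult tendsto_real_sqrt tendsto_ident_at energy tendsto_const)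
    then show "(?bound \<longlongrightarrow> 0) ?F" by simp
    show "\<forall>\<^sub>F l in ?F. norm (l * (\<integral>w. U l w * phi w \<partial>M)) \<le> norm (?bound l) * 1"
      using pos
    proof eventually_elim
      case (elim l)
      have "norm (l * (\<integral>w. U l w * phi w \<partial>M)) \<le> l * (L2norm M (U l) * L2norm M phi)"
        using elim L2_Cauchy_Schwarz[OF U[OF elim] phi] by (simp add: abs_mult)
      also have "\<dots> = ?bound l"
        using elim by (simp add: real_sqrt_mult L2norm_def)
      finally show ?case by simp
    qed
  qed
  have converge: "((\<lambda>l. \<integral>w. DU l i w * W i w \<partial>M) \<longlongrightarrow> (\<integral>w. Z i w * W i w \<partial>M)) ?F" for i
  proof (rule L2_inner_tendsto[OF _ Z W])
    show "eventually (\<lambda>l. L2 M (DU l i) \<and> L2 M (W i)) ?F"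
      using pos by eventually_elim (simp add: DU W)
    show "((\<lambda>l. \<integral>w. (DU l i w - Z i w)\<^sup>2 \<partial>M) \<longlongrightarrow> 0) ?F"
      using pos by (intro L2normv_tendsto_component[OF gradient])
        (simp add: eventually_mono L2_diff DU Z)
  qed simp
  have "((\<lambda>l. l * (\<integral>w. U l w * phi w \<partial>M) + 1/2 * (\<Sum>i\<in>UNIV. \<integral>w. DU l i w * W i w \<partial>M))
      \<longlongrightarrow> 0 + 1/2 * (\<Sum>i\<in>UNIV. \<integral>w. Z i w * W i w \<partial>M)) ?F"
    by (intro tendsto_add tendsto_mult tendsto_const tendsto_sum vanishing converge)
  moreover have "((\<lambda>l. l * (\<integral>w. U l w * phi w \<partial>M) + 1/2 * (\<Sum>i\<in>UNIV. \<integral>w. DU l i w * W i w \<partial>M))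
      \<longlongrightarrow> c) ?F"
    using pos by (intro Lim_transform_eventually[OF tendsto_const])
      (auto elim!: eventually_mono dest: eq[symmetric])
  ultimately show ?thesis by (intro tendsto_unique[of ?F]) simp_all
qed

lemma drift_identity:
  fixes a :: "'w \<Rightarrow> 'd::finite \<Rightarrow> 'd \<Rightarrow> real" and tau :: "real^'d \<Rightarrow> 'w \<Rightarrow> 'w"
  assumes meas: "\<And>x. tau x \<in> measurable M M" and pres: "\<And>x. distr M M (tau x) = M"
    and sym: "\<And>w i k. a w i k = a w k i"
    and da: "\<And>i. has_D M tau i (\<lambda>w. a w i j) (dA i j)"
    and b: "\<And>w. b j w = 1/2 * (\<Sum>i\<in>UNIV. dA i j w)"
    and Dpsi: "\<And>k. has_D M tau k psi (Dpsi k)"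
  shows "(\<integral>w. (\<Sum>k\<in>UNIV. a w j k * Dpsi k w) \<partial>M) = -2 * (\<integral>w. b j w * psi w \<partial>M)"
proof -
  have aL: "L2 M (\<lambda>w. a w k j)" and dAL: "L2 M (dA k j)" and DpsiL: "L2 M (Dpsi k)" for k
    using da Dpsi by (auto simp: has_D_def)
  have psiL: "L2 M psi" using Dpsi by (auto simp: has_D_def)
  have parts: "(\<integral>w. a w k j * Dpsi k w \<partial>M) = - (\<integral>w. dA k j w * psi w \<partial>M)" for k
    using has_D_integration_by_parts[OF meas pres da Dpsi] by (simp add: eq_neg_iff_add_eq_0 add.commute)
  have "(\<integral>w. (\<Sum>k\<in>UNIV. a w j k * Dpsi k w) \<partial>M) = (\<Sum>k\<in>UNIV. \<integral>w. a w k j * Dpsi k w \<partial>M)"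
    unfolding sym[of _ j] by (intro Bochner_Integration.integral_sum L2_integrable_mult aL DpsiL)
  also have "\<dots> = - (\<Sum>k\<in>UNIV. \<integral>w. dA k j w * psi w \<partial>M)"
    by (simp add: parts sum_negf)
  also have "(\<Sum>k\<in>UNIV. \<integral>w. dA k j w * psi w \<partial>M) = (\<integral>w. (\<Sum>k\<in>UNIV. dA k j w * psi w) \<partial>M)"
    by (rule Bochner_Integration.integral_sum[symmetric]) (intro L2_integrable_mult dAL psiL)
  also have "\<dots> = (\<integral>w. 2 * (b j w * psi w) \<partial>M)"
    by (simp add: b sum_distrib_right)
  finally show ?thesis by simp
qed

lemma integral_bilinear_form:
  fixes F :: "'i::finite \<Rightarrow> 'w \<Rightarrow> real" and A :: "'w \<Rightarrow> 'i \<Rightarrow> 'k::finite \<Rightarrow> real"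
  assumes "\<And>i. integrable M (\<lambda>w. F i w * (\<Sum>k\<in>UNIV. A w i k * G k w))"
  shows "(\<integral>w. (\<Sum>i\<in>UNIV. \<Sum>k\<in>UNIV. F i w * A w i k * G k w) \<partial>M)
       = (\<Sum>i\<in>UNIV. \<integral>w. F i w * (\<Sum>k\<in>UNIV. A w i k * G k w) \<partial>M)"
proof -
  have "(\<Sum>i\<in>UNIV. \<Sum>k\<in>UNIV. F i w * A w i k * G k w) = (\<Sum>i\<in>UNIV. F i w * (\<Sum>k\<in>UNIV. A w i k * G k w))"
    for w by (simp add: sum_distrib_left mult.assoc)
  then show ?thesis using assms by (simp add: Bochner_Integration.integral_sum)
qed

lemma integral_affine_combination:
  fixes X :: "real^'i" and Z :: "'i \<Rightarrow> 'i \<Rightarrow> 'w \<Rightarrow> real"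
  assumes W: "\<And>i. integrable M (W i)" and ZW: "\<And>j i. integrable M (\<lambda>w. Z j i w * W i w)"
  shows "(\<Sum>i\<in>UNIV. \<integral>w. (X $ i + (\<Sum>j\<in>UNIV. Z j i w * X $ j)) * W i w \<partial>M)
       = (\<Sum>i\<in>UNIV. X $ i * (\<integral>w. W i w \<partial>M))
         + (\<Sum>j\<in>UNIV. X $ j * (\<Sum>i\<in>UNIV. \<integral>w. Z j i w * W i w \<partial>M))"
proof -
  have "(\<integral>w. (X $ i + (\<Sum>j\<in>UNIV. Z j i w * X $ j)) * W i w \<partial>M)
      = X $ i * (\<integral>w. W i w \<partial>M) + (\<Sum>j\<in>UNIV. X $ j * (\<integral>w. Z j i w * W i w \<partial>M))" for i
  proof -
    have "(\<integral>w. (X $ i + (\<Sum>j\<in>UNIV. Z j i w * X $ j)) * W i w \<partial>M)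
        = (\<integral>w. X $ i * W i w + (\<Sum>j\<in>UNIV. X $ j * (Z j i w * W i w)) \<partial>M)"
      by (intro Bochner_Integration.integral_cong) (simp_all add: ring_distribs sum_distrib_left mult_ac)
    also have "\<dots> = X $ i * (\<integral>w. W i w \<partial>M) + (\<Sum>j\<in>UNIV. X $ j * (\<integral>w. Z j i w * W i w \<partial>M))"
      using W ZW by (simp add: Bochner_Integration.integral_sum)
    finally show ?thesis .
  qed
  moreover have "(\<Sum>i\<in>UNIV. \<Sum>j\<in>UNIV. X $ j * (\<integral>w. Z j i w * W i w \<partial>M))
      = (\<Sum>j\<in>UNIV. X $ j * (\<Sum>i\<in>UNIV. \<integral>w. Z j i w * W i w \<partial>M))"
    by (subst sum.swap) (simp add: sum_distrib_left)
  ultimately show ?thesis by (simp add: sum.distrib)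
qed

lemma corrector_identity:
  fixes a :: "'w \<Rightarrow> 'i::finite \<Rightarrow> 'k::finite \<Rightarrow> real" and DU :: "real \<Rightarrow> 'i \<Rightarrow> 'w \<Rightarrow> real"
  assumes U: "\<And>l. 0 < l \<Longrightarrow> L2 M (U l)" and DU: "\<And>l i. 0 < l \<Longrightarrow> L2 M (DU l i)"
    and Z: "\<And>i. L2 M (Z i)" and phi: "L2 M phi" and W: "\<And>i. L2 M (\<lambda>w. \<Sum>k\<in>UNIV. a w i k * G k w)"
    and eq: "\<And>l. 0 < l \<Longrightarrow> l * (\<integral>w. U l w * phi w \<partial>M)
      + 1/2 * (\<integral>w. (\<Sum>i\<in>UNIV. \<Sum>k\<in>UNIV. a w i k * DU l i w * G k w) \<partial>M) = c"
    and lim: "((\<lambda>l. l * (L2norm M (U l))\<^sup>2 + L2normv M (\<lambda>i w. DU l i w - Z i w)) \<longlongrightarrow> 0) (at_right 0)"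
  shows "(\<Sum>i\<in>UNIV. \<integral>w. Z i w * (\<Sum>k\<in>UNIV. a w i k * G k w) \<partial>M) = 2 * c"
proof -
  have "1/2 * (\<Sum>i\<in>UNIV. \<integral>w. Z i w * (\<Sum>k\<in>UNIV. a w i k * G k w) \<partial>M) = c"
  proof (rule resolvent_equation_limit[OF U DU Z phi W _ lim])
    fix l :: real assume l: "0 < l"
    have "(\<integral>w. (\<Sum>i\<in>UNIV. \<Sum>k\<in>UNIV. a w i k * DU l i w * G k w) \<partial>M)
        = (\<integral>w. (\<Sum>i\<in>UNIV. \<Sum>k\<in>UNIV. DU l i w * a w i k * G k w) \<partial>M)"
      by (simp add: mult.commute)
    also have "\<dots> = (\<Sum>i\<in>UNIV. \<integral>w. DU l i w * (\<Sum>k\<in>UNIV. a w i k * G k w) \<partial>M)"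
      by (intro integral_bilinear_form L2_integrable_mult DU[OF l] W)
    finally show "l * (\<integral>w. U l w * phi w \<partial>M)
        + 1/2 * (\<Sum>i\<in>UNIV. \<integral>w. DU l i w * (\<Sum>k\<in>UNIV. a w i k * G k w) \<partial>M) = c"
      using eq[OF l] by simp
  qed
  then show ?thesis by simp
qed

theorem mainTheorem13:
  fixes M :: "'w measure" and tau :: "real^'d \<Rightarrow> 'w \<Rightarrow> 'w"
    and sigma :: "'w \<Rightarrow> real^'d^'d" and Lam :: real
    and dA :: "'d \<Rightarrow> 'd \<Rightarrow> 'w \<Rightarrow> real" and b :: "'d \<Rightarrow> 'w \<Rightarrow> real"
    and u :: "real \<Rightarrow> 'd \<Rightarrow> 'w \<Rightarrow> real" and Du :: "real \<Rightarrow> 'd \<Rightarrow> 'd \<Rightarrow> 'w \<Rightarrow> real"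
    and zeta :: "'d \<Rightarrow> 'd \<Rightarrow> 'w \<Rightarrow> real"
    and X :: "real^'d" and psi :: "'w \<Rightarrow> real" and Dpsi :: "'d \<Rightarrow> 'w \<Rightarrow> real"
  assumes flow: "ergodic_flow M tau"
    and sigma_meas: "\<forall>k l. (\<lambda>w. sigma w $ k $ l) \<in> borel_measurable M"
    and sigma_smooth: "\<forall>k l. bdd_smooth_family (space M) (\<lambda>w x. sigma (tau x w) $ k $ l)"
    and Lam_pos: "0 < Lam"
    and elliptic: "\<forall>w\<in>space M. \<forall>\<xi>::real^'d.
          Lam * (\<xi> \<bullet> \<xi>) \<le> \<xi> \<bullet> ((sigma w ** transpose (sigma w)) *v \<xi>) \<and>
          \<xi> \<bullet> ((sigma w ** transpose (sigma w)) *v \<xi>) \<le> (\<xi> \<bullet> \<xi>) / Lam"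
    and dA: "\<forall>i j. has_D M tau i (\<lambda>w. (sigma w ** transpose (sigma w)) $ i $ j) (dA i j)"
    and b_def: "\<forall>j w. b j w = 1/2 * (\<Sum>i\<in>UNIV. dA i j w)"
    and u_res: "\<forall>l>0. \<forall>j. u l j \<in> Hset M tau \<and> (\<forall>i. has_D M tau i (u l j) (Du l j i)) \<and>
          (\<forall>phi Dphi. phi \<in> Hset M tau \<and> (\<forall>i. has_D M tau i phi (Dphi i)) \<longrightarrow>
             l * (\<integral>w. u l j w * phi w \<partial>M)
             + 1/2 * (\<integral>w. (\<Sum>i\<in>UNIV. \<Sum>k\<in>UNIV.
                   (sigma w ** transpose (sigma w)) $ i $ k * Du l j i w * Dphi k w) \<partial>M)
             = (\<integral>w. b j w * phi w \<partial>M))"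
    and zeta_L2: "\<forall>j i. L2 M (zeta j i)"
    and zeta_lim: "\<forall>j. ((\<lambda>l. l * (L2norm M (u l j))\<^sup>2 + L2normv M (\<lambda>i w. Du l j i w - zeta j i w))
                      \<longlongrightarrow> 0) (at_right 0)"
    and psi_H: "psi \<in> Hset M tau"
    and Dpsi: "\<forall>i. has_D M tau i psi (Dpsi i)"
  shows "(\<integral>w. (\<Sum>i\<in>UNIV. \<Sum>k\<in>UNIV.
            (X $ i + (\<Sum>j\<in>UNIV. zeta j i w * X $ j))
            * (sigma w ** transpose (sigma w)) $ i $ k * Dpsi k w) \<partial>M) = 0"
proof -
  define a where "a w i k = (sigma w ** transpose (sigma w)) $ i $ k" for w i k
  define W where "W i w = (\<Sum>k\<in>UNIV. a w i k * Dpsi k w)" for i w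
  note flow_facts = ergodic_flow_measure_preserving[OF flow]
  have psiL: "L2 M psi" and DpsiL: "\<And>k. L2 M (Dpsi k)" using Dpsi by (auto simp: has_D_def)
  obtain C where C: "\<forall>w\<in>space M. \<forall>i k. \<bar>a w i k\<bar> \<le> C"
    using diffusion_matrix_bounded[OF flow_facts(4) sigma_smooth] unfolding a_def by blast
  have aM: "(\<lambda>w. a w i k) \<in> borel_measurable M" for i k
    using dA by (auto simp: has_D_def L2_def a_def)
  have WL: "L2 M (W i)" for i
    unfolding W_def by (intro L2_sum L2_bounded_mult[where B=C] DpsiL aM) (use C in auto)
  have drift: "(\<integral>w. W j w \<partial>M) = -2 * (\<integral>w. b j w * psi w \<partial>M)" for j
    unfolding W_def a_def
    by (rule drift_identity[OF flow_facts(2,3) gram_symmetric]) (use dA b_def Dpsi in auto)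
  have corrector: "(\<Sum>i\<in>UNIV. \<integral>w. zeta j i w * W i w \<partial>M) = 2 * (\<integral>w. b j w * psi w \<partial>M)" for j
    unfolding W_def
  proof (rule corrector_identity[where U="\<lambda>l. u l j" and DU="\<lambda>l. Du l j"])
    show "l * (\<integral>w. u l j w * psi w \<partial>M)
        + 1/2 * (\<integral>w. (\<Sum>i\<in>UNIV. \<Sum>k\<in>UNIV. a w i k * Du l j i w * Dpsi k w) \<partial>M)
        = (\<integral>w. b j w * psi w \<partial>M)" if "0 < l" for l
      using u_res psi_H Dpsi that unfolding a_def by blast
  qed (use u_res zeta_L2 zeta_lim psiL WL[unfolded W_def] in \<open>auto simp: has_D_def\<close>)
  have FL: "L2 M (\<lambda>w. X $ i + (\<Sum>j\<in>UNIV. zeta j i w * X $ j))" for i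
    using zeta_L2 by (intro L2_add L2_const[OF flow_facts(1)] L2_sum) (auto simp: mult.commute L2_cmult)
  have "(\<integral>w. (\<Sum>i\<in>UNIV. \<Sum>k\<in>UNIV. (X $ i + (\<Sum>j\<in>UNIV. zeta j i w * X $ j))
            * (sigma w ** transpose (sigma w)) $ i $ k * Dpsi k w) \<partial>M)
      = (\<Sum>i\<in>UNIV. \<integral>w. (X $ i + (\<Sum>j\<in>UNIV. zeta j i w * X $ j)) * W i w \<partial>M)"
    unfolding W_def a_def
    by (rule integral_bilinear_form) (rule L2_integrable_mult[OF FL WL[unfolded W_def a_def]])
  also have "\<dots> = (\<Sum>i\<in>UNIV. X $ i * (\<integral>w. W i w \<partial>M))
      + (\<Sum>j\<in>UNIV. X $ j * (\<Sum>i\<in>UNIV. \<integral>w. zeta j i w * W i w \<partial>M))"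
    using L2_integrable_mult[OF WL L2_const[OF flow_facts(1)]] L2_integrable_mult[OF zeta_L2[rule_format] WL]
    by (intro integral_affine_combination) auto
  also have "\<dots> = 0" by (simp add: drift corrector sum.distrib[symmetric])
  finally show ?thesis .
qed

end
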